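(* In the setting of the SW-MOSS policy (see context) with $\eta>1/2$, for every arm $k\in\mathcal{K}$, every time $t\in\mathcal{T}$, every $x>0$ and every $l\ge 1$, the probability of the event $A=\{\hat\mu^k_{n_k(t)}+c_{n_k(t)}\le M_t^k-x,\ n_k(t)\ge l\}$ is at most \[\frac{(2\eta)^{3/2}}{\ln(2\eta)}\,\frac{K}{\tau x^2}\exp\!\big(-x^2 l/\eta\big),\] and the probability of the event $B=\{\hat\mu^k_{n_k(t)}-c_{n_k(t)}\ge M_t^k+x,\ n_k(t)\ge l\}$ is bounded by the same quantity.
   Context: Arms $\mathcal{K}=\{1,\dots,K\}$, times $\mathcal{T}=\{1,\dots,T\}$; rewards $X_t^k$ are independent with means $\mu_t^k$ and satisfy: for all $\lambda\in\mathbb{R}$, $\mathbb{E}[\exp(\lambda(X_t^k-\mu_t^k))]\le\exp(\lambda^2/8)$, and $\mu_t^k\in[a,a+b]$ for fixed $a\in\mathbb{R},b>0$. At time $t$ the chosen arm $\varphi_t$ depends only on past observations $\{(\varphi_s,X_s^{\varphi_s})\}_{s<t}$. SW-MOSS with budget $V_T>0$: $\tau=\lceil K^{1/3}(T/V_T)^{2/3}\rceil$, first select each arm once; then at each $t$, with window $\mathcal{W}_t=\{\max(1,t-\tau),\dots,t-1\}$, $n_k(t)=\sum_{s\in\mathcal{W}_t}\mathbf{1}\{\varphi_s=k\}$, $\hat\mu^k_{n_k(t)}=\frac{1}{n_k(t)}\sum_{s\in\mathcal{W}_t}X_s^{\varphi_s}\mathbf{1}\{\varphi_s=k\}$, $c_n=\sqrt{\eta\max(\ln(\tau/(Kn)),0)/n}$,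 select $\varphi_t=\arg\max_k\hat\mu^k_{n_k(t)}+c_{n_k(t)}$. Define $M_t^k=\frac{1}{n_k(t)}\sum_{s\in\mathcal{W}_t}\mu_s^k\mathbf{1}\{\varphi_s=k\}$. *)

theory Defs
  imports "HOL-Probability.Probability"
begin

text \<open>SW-MOSS policy, arms 1..K, times 1..T. Rewards are modelled as a reward table
  Xr s k (reward of arm k at time s); the policy only reads Xr s (phi s) for s < t.\<close>

definition swmoss_tau :: "nat \<Rightarrow> nat \<Rightarrow> real \<Rightarrow> nat" where
  "swmoss_tau K T V = nat \<lceil>real K powr (1/3) * (real T / V) powr (2/3)\<rceil>"

definition window :: "nat \<Rightarrow> nat \<Rightarrow> nat set" where
  "window \<tau> t = {max 1 (t - \<tau>)..<t}"

definition pulls :: "(nat \<Rightarrow> nat) \<Rightarrow> nat \<Rightarrow> nat \<Rightarrow> nat \<Rightarrow> nat" where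
  "pulls \<phi> \<tau> k t = card {s \<in> window \<tau> t. \<phi> s = k}"

definition emp_mean :: "(nat \<Rightarrow> nat) \<Rightarrow> (nat \<Rightarrow> nat \<Rightarrow> real) \<Rightarrow> nat \<Rightarrow> nat \<Rightarrow> nat \<Rightarrow> real" where
  "emp_mean \<phi> Xr \<tau> k t = (\<Sum>s\<in>{s \<in> window \<tau> t. \<phi> s = k}. Xr s k) / real (pulls \<phi> \<tau> k t)"

text \<open>M_t^k: window average of the means over the times arm k was pulled\<close>
definition win_mean :: "(nat \<Rightarrow> nat) \<Rightarrow> (nat \<Rightarrow> nat \<Rightarrow> real) \<Rightarrow> nat \<Rightarrow> nat \<Rightarrow> nat \<Rightarrow> real" where
  "win_mean \<phi> \<mu> \<tau> k t = (\<Sum>s\<in>{s \<in> window \<tau> t. \<phi> s = k}. \<mu> s k) / real (pulls \<phi> \<tau> k t)"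

definition conf :: "real \<Rightarrow> nat \<Rightarrow> nat \<Rightarrow> nat \<Rightarrow> real" where
  "conf \<eta> \<tau> K n = sqrt (\<eta> * max (ln (real \<tau> / (real K * real n))) 0 / real n)"

text \<open>Conventions: times t \<le> K pull arm t (each arm once); an arm with no pull in the window
  has index +infinity (smallest such arm chosen); ties in the argmax are broken by smallest index.\<close>
definition swmoss_choice :: "nat \<Rightarrow> nat \<Rightarrow> real \<Rightarrow> (nat \<Rightarrow> nat \<Rightarrow> real) \<Rightarrow> (nat \<Rightarrow> nat) \<Rightarrow> nat \<Rightarrow> nat" where
  "swmoss_choice K \<tau> \<eta> Xr \<phi> t =
    (if t \<le> K then t
     else if \<exists>k\<in>{1..K}. pulls \<phi> \<tau> k t = 0 then (LEAST k. k \<in> {1..K} \<and> pulls \<phi> \<tau> k t = 0)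
     else (LEAST k. k \<in> {1..K} \<and> (\<forall>j\<in>{1..K}.
             emp_mean \<phi> Xr \<tau> j t + conf \<eta> \<tau> K (pulls \<phi> \<tau> j t)
             \<le> emp_mean \<phi> Xr \<tau> k t + conf \<eta> \<tau> K (pulls \<phi> \<tau> k t))))"

fun swmoss_hist :: "nat \<Rightarrow> nat \<Rightarrow> real \<Rightarrow> (nat \<Rightarrow> nat \<Rightarrow> real) \<Rightarrow> nat \<Rightarrow> nat list" where
  "swmoss_hist K \<tau> \<eta> Xr 0 = []"
| "swmoss_hist K \<tau> \<eta> Xr (Suc t) =
    (let h = swmoss_hist K \<tau> \<eta> Xr t in h @ [swmoss_choice K \<tau> \<eta> Xr (\<lambda>s. h ! (s - 1)) (Suc t)])"

definition swmoss :: "nat \<Rightarrow> nat \<Rightarrow> real \<Rightarrow> real \<Rightarrow> (nat \<Rightarrow> nat \<Rightarrow> real) \<Rightarrow> nat \<Rightarrow> nat" where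
  "swmoss K T V \<eta> Xr t = swmoss_hist K (swmoss_tau K T V) \<eta> Xr t ! (t - 1)"

end

theory Submission
  imports Defs
begin

(*
  Fix the arm k and the time t, let n be the number of pulls of k in the window and D the sum
  of the centred rewards collected by those pulls. Since the policy only looks at the past, the
  decision to pull k at time s is independent of the reward at time s, so
  exp (\<theta> D - \<theta>\<^sup>2 n / 8) has expectation at most 1 for every \<theta>.
  Split the range l \<le> n \<le> \<tau> into geometric buckets [L, z\<^sup>2 L]. On one bucket a single \<theta>
  turns the event n (x + c_n) \<le> D into a Markov bound
  exp (- 8z/(1+z)\<^sup>2 (L x\<^sup>2 + \<eta> (ln (\<tau> / (K z\<^sup>2 L)))\<^sup>+)), and the sum of these bounds over the
  buckets is dominated by a telescoping series with value (2\<eta>)^(3/2) / ln (2\<eta>) K / (\<tau> x\<^sup>2)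
  exp (- x\<^sup>2 l / \<eta>). The two events of the theorem are this statement for D and for -D.
*)

section \<open>Elementary inequalities for the peeling argument\<close>

lemma powr_three_halves: "0 \<le> x \<Longrightarrow> x powr (3/2) = x * sqrt (x::real)"
  using powr_add[of x 1 "1/2"] by (simp add: powr_half_sqrt)

lemma one_add_mult_le_max_mult_exp:
  fixes a g w :: real
  assumes a: "0 < a" and g: "0 < g" and w: "0 \<le> w"
  shows "1 + a * w \<le> max 1 (a / g) * exp (g * w)"
proof (cases "a \<le> g")
  case True
  have "1 + a * w \<le> 1 + g * w" using True w by (simp add: mult_right_mono)
  also have "\<dots> \<le> exp (g * w)" by (rule exp_ge_add_one_self)
  also have "\<dots> \<le> max 1 (a / g) * exp (g * w)" by simp
  finally show ?thesis .
next
  case False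
  have "1 + a * w \<le> (a / g) * (1 + g * w)" using False g w by (simp add: field_simps)
  also have "\<dots> \<le> (a / g) * exp (g * w)"
    using a g by (intro mult_left_mono exp_ge_add_one_self) auto
  also have "\<dots> \<le> max 1 (a / g) * exp (g * w)" by (intro mult_right_mono) auto
  finally show ?thesis .
qed

lemma mult_exp_le_one_minus_exp:
  fixes \<rho> a g C w :: real
  assumes \<rho>: "0 < \<rho>" and a: "0 < a" and g: "0 < g" and w: "0 \<le> w"
    and Ca: "\<rho> \<le> C * a" and Cg: "\<rho> \<le> C * g"
  shows "\<rho> * w * exp (- (g * w)) \<le> C * (1 - exp (- (a * w)))"
proof -
  define m where "m = max 1 (a / g)"
  have "1 + a * w \<le> m * exp (g * w)"
    unfolding m_def using a g w by (rule one_add_mult_le_max_mult_exp)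
  then have m_bound: "exp (- (g * w)) * (1 + a * w) \<le> m"
    by (simp add: exp_minus field_simps)
  have "\<rho> * m \<le> C * a"
  proof (cases "a / g \<le> 1")
    case True
    then show ?thesis using Ca by (simp add: m_def)
  next
    case False
    have "\<rho> * (a / g) \<le> (C * g) * (a / g)" using Cg a g by (intro mult_right_mono) auto
    then show ?thesis using False g by (simp add: m_def)
  qed
  have "0 < C * a" using Ca \<rho> by linarith
  then have "0 < C" using a by (simp add: zero_less_mult_iff)
  have "exp (- (a * w)) * (1 + a * w) \<le> 1"
    using exp_ge_add_one_self[of "a * w"] by (simp add: exp_minus field_simps)
  then have "a * w \<le> (1 - exp (- (a * w))) * (1 + a * w)" by (simp add: algebra_simps)
  then have "C * a * w \<le> C * ((1 - exp (- (a * w))) * (1 + a * w))"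
    using \<open>0 < C\<close> by (simp add: mult.assoc mult_left_mono)
  moreover have "\<rho> * w * (exp (- (g * w)) * (1 + a * w)) \<le> \<rho> * m * w"
    using mult_left_mono[OF m_bound, of "\<rho> * w"] \<rho> w by (simp add: mult_ac)
  moreover have "\<rho> * m * w \<le> C * a * w" using \<open>\<rho> * m \<le> C * a\<close> w by (rule mult_right_mono)
  ultimately have "(\<rho> * w * exp (- (g * w))) * (1 + a * w) \<le> (C * (1 - exp (- (a * w)))) * (1 + a * w)"
    by (simp add: mult_ac)
  then show ?thesis using a w by (simp add: mult_le_cancel_right_pos add_pos_nonneg)
qed

(* The peeling sum telescopes: with w running through a geometric grid of ratio \<rho>, each term
   is dominated by a difference of consecutive values of exp (- w / \<eta>). *)
lemma mult_exp_le_exp_diff: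
  fixes \<rho> \<kappa> \<eta> C w :: real
  assumes \<rho>: "1 < \<rho>" and \<eta>: "0 < \<eta>" and w: "0 \<le> w"
    and C1: "\<rho> \<le> C * ((\<rho> - 1) / \<eta>)" and C2: "\<rho> \<le> C * (\<kappa> - 1 / \<eta>)"
  shows "\<rho> * w * exp (- \<kappa> * w) \<le> C * (exp (- w / \<eta>) - exp (- \<rho> * w / \<eta>))"
proof -
  define a where "a = (\<rho> - 1) / \<eta>"
  define g where "g = \<kappa> - 1 / \<eta>"
  have a: "0 < a" using \<rho> \<eta> by (simp add: a_def)
  have "0 < C * a" using C1 \<rho> by (simp add: a_def)
  then have "0 < C" using a by (simp add: zero_less_mult_iff)
  moreover have "0 < C * g" using C2 \<rho> by (simp add: g_def)
  ultimately have g: "0 < g" by (simp add: zero_less_mult_iff)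
  have "\<rho> * w * exp (- (g * w)) \<le> C * (1 - exp (- (a * w)))"
    using \<rho> a g w C1 C2 by (intro mult_exp_le_one_minus_exp) (auto simp: a_def g_def)
  then have "\<rho> * w * exp (- (g * w)) * exp (- w / \<eta>) \<le> C * (1 - exp (- (a * w))) * exp (- w / \<eta>)"
    by (intro mult_right_mono) auto
  moreover have "exp (- \<kappa> * w) = exp (- (g * w)) * exp (- w / \<eta>)"
    by (simp add: g_def algebra_simps flip: exp_add)
  moreover have "exp (- \<rho> * w / \<eta>) = exp (- (a * w)) * exp (- w / \<eta>)"
    using \<eta> by (simp add: a_def field_simps flip: exp_add)
  ultimately show ?thesis by (simp add: algebra_simps)
qed

lemma peeling_ratio_small:
  fixes z :: real
  assumes z: "1 < z" "z \<le> 2"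
  defines "C \<equiv> z ^ 3 / (2 * ln z)" and "\<eta> \<equiv> z\<^sup>2 / 2"
  shows "z\<^sup>2 \<le> C * ((z\<^sup>2 - 1) / \<eta>)" and "z\<^sup>2 \<le> C * (8 * z / (1 + z)\<^sup>2 - 1 / \<eta>)"
proof -
  have L: "0 < ln z" "ln z \<le> z - 1" using z by (auto simp: ln_le_minus_one)
  have "C * ((z\<^sup>2 - 1) / \<eta>) = z * (z\<^sup>2 - 1) / ln z"
    using L z by (simp add: C_def \<eta>_def power2_eq_square power3_eq_cube field_simps)
  moreover have "z * ln z \<le> z\<^sup>2 - 1"
    using mult_left_mono[OF L(2), of z] z by (simp add: power2_eq_square algebra_simps)
  then have "z\<^sup>2 * ln z \<le> z * (z\<^sup>2 - 1)"
    using mult_left_mono[of "z * ln z" "z\<^sup>2 - 1" z] z by (simp add: power2_eq_square mult.assoc)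
  ultimately show "z\<^sup>2 \<le> C * ((z\<^sup>2 - 1) / \<eta>)"
    using L by (simp add: pos_le_divide_eq)
  have "z ^ 3 \<le> 2 * z\<^sup>2" using z by (simp add: power2_eq_square power3_eq_cube)
  then have "(z - 1) * (z ^ 3 - 2 * z\<^sup>2 - 2 * z - 1) \<le> 0"
    using z by (intro mult_nonneg_nonpos) auto
  then have "z * (z - 1) * (1 + z)\<^sup>2 \<le> 4 * z ^ 3 - (1 + z)\<^sup>2"
    by (simp add: algebra_simps power2_eq_square power3_eq_cube power4_eq_xxxx)
  moreover have "z * ln z * (1 + z)\<^sup>2 \<le> z * (z - 1) * (1 + z)\<^sup>2"
    using L z by (intro mult_right_mono mult_left_mono) auto
  ultimately have "z * ln z * (1 + z)\<^sup>2 \<le> 4 * z ^ 3 - (1 + z)\<^sup>2" by linarith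
  then have "z * (z * ln z * (1 + z)\<^sup>2) \<le> z * (4 * z ^ 3 - (1 + z)\<^sup>2)"
    using z by (intro mult_left_mono) auto
  then have "z\<^sup>2 * (ln z * P) \<le> z * (4 * z ^ 3 - P)" if "P = (1 + z)\<^sup>2" for P
    using that by (simp add: power2_eq_square mult.assoc)
  moreover have "C * (8 * z / P - 1 / \<eta>) = z * (4 * z ^ 3 - P) / (ln z * P)" if "0 < P" for P
    using L z that by (simp add: C_def \<eta>_def field_simps power2_eq_square power3_eq_cube)
  ultimately show "z\<^sup>2 \<le> C * (8 * z / (1 + z)\<^sup>2 - 1 / \<eta>)"
    using L z by (simp add: pos_le_divide_eq)
qed

lemma peeling_ratio_large:
  fixes \<eta> :: real
  assumes \<eta>: "2 < \<eta>"
  defines "C \<equiv> (2 * \<eta>) powr (3/2) / ln (2 * \<eta>)"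
  shows "(2::real)\<^sup>2 \<le> C * ((2\<^sup>2 - 1) / \<eta>)" and "(2::real)\<^sup>2 \<le> C * (8 * 2 / (1 + 2)\<^sup>2 - 1 / \<eta>)"
proof -
  define y where "y = sqrt (2 * \<eta>)"
  have y: "1 < y" "y\<^sup>2 = 2 * \<eta>" using \<eta> by (auto simp: y_def)
  have "ln (y / exp 1) \<le> y / exp 1 - 1" using y by (intro ln_le_minus_one) auto
  then have "ln y \<le> y / exp 1" using y by (simp add: ln_div)
  moreover have "y / exp 1 \<le> y / 2"
    using y exp_ge_add_one_self[of 1] by (intro divide_left_mono) auto
  ultimately have "ln y \<le> y / 2" by linarith
  then have "ln (2 * \<eta>) \<le> y" using y by (simp flip: y(2) add: ln_realpow)
  moreover have "(2 * \<eta>) powr (3/2) = 2 * \<eta> * y"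
    using \<eta> by (simp add: y_def powr_three_halves)
  ultimately have C: "2 * \<eta> \<le> C"
    using \<eta> y by (simp add: C_def field_simps mult_left_mono)
  then show "(2::real)\<^sup>2 \<le> C * ((2\<^sup>2 - 1) / \<eta>)"
    using \<eta> by (simp add: field_simps)
  have "4 \<le> 2 * \<eta> * (16 / 9 - 1 / \<eta>)"
    using \<eta> by (simp add: field_simps)
  also have "\<dots> \<le> C * (16 / 9 - 1 / \<eta>)"
    using C \<eta> by (intro mult_right_mono) (auto simp: field_simps)
  finally show "(2::real)\<^sup>2 \<le> C * (8 * 2 / (1 + 2)\<^sup>2 - 1 / \<eta>)"
    by simp
qed

(* The constant (2\<eta>)^(3/2) / ln (2\<eta>) is what the ratio z = sqrt (2\<eta>) produces for \<eta> \<le> 2;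
   for larger \<eta> the ratio z = 2 already suffices. *)
lemma peeling_ratio_exists:
  fixes \<eta> :: real
  assumes \<eta>: "1/2 < \<eta>"
  defines "C \<equiv> (2 * \<eta>) powr (3/2) / ln (2 * \<eta>)"
  obtains z where "1 < z" "z\<^sup>2 \<le> C * ((z\<^sup>2 - 1) / \<eta>)" "z\<^sup>2 \<le> C * (8 * z / (1 + z)\<^sup>2 - 1 / \<eta>)"
proof (cases "\<eta> \<le> 2")
  case True
  define z where "z = sqrt (2 * \<eta>)"
  have z: "1 < z" "z \<le> 2" "\<eta> = z\<^sup>2 / 2"
    using \<eta> True by (auto simp: z_def real_sqrt_le_iff[of _ 4, simplified])
  have "(2 * \<eta>) powr (3/2) = z ^ 3"
    using z(1) by (simp add: powr_three_halves z_def power3_eq_cube)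
  moreover have "ln (2 * \<eta>) = 2 * ln z"
    using z(1) by (simp add: z(3) ln_realpow)
  ultimately have "C = z ^ 3 / (2 * ln z)" by (simp add: C_def)
  then show ?thesis using peeling_ratio_small[OF z(1,2)] z(1) that unfolding z(3) by simp
next
  case False
  then show ?thesis using peeling_ratio_large[of \<eta>] that[of 2] unfolding C_def by simp
qed

(* A single \<theta> serves the whole bucket L \<le> n \<le> z\<^sup>2 L; against the optimal \<theta> = 4 D / n, which
   gives at least 2 S\<^sup>2, it loses only the factor 4z/(1+z)\<^sup>2. *)
lemma chernoff_exponent_on_bucket:
  fixes L z n S D :: real
  assumes L: "0 < L" and z: "1 < z" and n: "L \<le> n" "n \<le> z\<^sup>2 * L"
    and S: "0 \<le> S" and D: "sqrt n * S \<le> D"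
  defines "\<theta> \<equiv> 8 * S / (sqrt L * (1 + z))"
  shows "8 * z / (1 + z)\<^sup>2 * S\<^sup>2 \<le> \<theta> * D - \<theta>\<^sup>2 * n / 8"
proof -
  define r where "r = sqrt L"
  define v where "v = sqrt n"
  have r: "0 < r" using L by (simp add: r_def)
  have "r \<le> v" using n by (simp add: r_def v_def)
  moreover have "v \<le> z * r"
    using real_sqrt_le_mono[OF n(2)] z by (simp add: v_def r_def real_sqrt_mult)
  ultimately have "0 \<le> 8 * S\<^sup>2 / (r\<^sup>2 * (1 + z)\<^sup>2) * ((v - r) * (z * r - v))"
    using r z by (intro mult_nonneg_nonneg) auto
  also have "\<dots> = \<theta> * v * S - \<theta>\<^sup>2 * v\<^sup>2 / 8 - 8 * z / (1 + z)\<^sup>2 * S\<^sup>2"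
  proof -
    define P where "P = 1 + z"
    have "0 < P" using z by (simp add: P_def)
    then show ?thesis
      using r by (simp add: \<theta>_def r_def[symmetric] P_def[symmetric] field_simps power2_eq_square)
        (simp add: P_def algebra_simps)
  qed
  also have "\<theta> * v * S \<le> \<theta> * D"
    using mult_left_mono[OF D, of \<theta>] S L z by (simp add: \<theta>_def v_def mult.assoc)
  finally show ?thesis using L n by (simp add: v_def)
qed

lemma sqrt_level_le_deviation:
  fixes \<tau> K n :: nat and \<rho> L x \<eta> D :: real
  assumes \<tau>: "0 < \<tau>" and K: "0 < K" and L: "0 < L" and n: "L \<le> n" "n \<le> \<rho> * L"
    and \<eta>: "0 < \<eta>" and x: "0 \<le> x" and D: "n * (x + conf \<eta> \<tau> K n) \<le> D"
  shows "sqrt n * sqrt (L * x\<^sup>2 + \<eta> * max (ln (\<tau> / (K * (\<rho> * L)))) 0) \<le> D"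
proof -
  define c where "c = conf \<eta> \<tau> K n"
  define m where "m = max (ln (\<tau> / (K * real n))) 0"
  have n0: "0 < real n" using L n by linarith
  have "ln (\<tau> / (K * (\<rho> * L))) \<le> ln (\<tau> / (K * real n))"
    using \<tau> K n n0 by (simp add: frac_le mult_left_mono)
  then have q: "max (ln (\<tau> / (K * (\<rho> * L)))) 0 \<le> m" by (simp add: m_def)
  have c: "0 \<le> c" "n * c\<^sup>2 = \<eta> * m"
    using \<eta> n0 by (simp_all add: c_def conf_def m_def)
  have "n * (L * x\<^sup>2 + \<eta> * max (ln (\<tau> / (K * (\<rho> * L)))) 0) \<le> n * (n * x\<^sup>2 + \<eta> * m)"
    using n q \<eta> n0 by (intro mult_left_mono add_mono mult_right_mono) auto
  also have "\<dots> = (n * x)\<^sup>2 + (n * c)\<^sup>2" using c by (simp add: power2_eq_square algebra_simps)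
  also have "\<dots> \<le> (n * x + n * c)\<^sup>2" using n0 x c by (simp add: power2_eq_square algebra_simps)
  also have "\<dots> \<le> D\<^sup>2" using D n0 x c by (intro power_mono) (auto simp: c_def algebra_simps)
  finally have "sqrt (n * (L * x\<^sup>2 + \<eta> * max (ln (\<tau> / (K * (\<rho> * L)))) 0)) \<le> sqrt (D\<^sup>2)"
    by (rule real_sqrt_le_mono)
  moreover have "0 \<le> n * (x + c)" using n0 x c by simp
  then have "0 \<le> D" using D by (simp add: c_def)
  ultimately show ?thesis by (simp add: real_sqrt_mult)
qed

lemma exp_neg_level_le:
  fixes \<tau> K L \<rho> \<kappa> \<eta> x :: real
  assumes \<tau>: "0 < \<tau>" and K: "0 < K" and L: "0 < L" and \<rho>: "0 < \<rho>" and \<kappa>: "1 \<le> \<kappa> * \<eta>"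
  shows "exp (- (\<kappa> * (L * x\<^sup>2 + \<eta> * max (ln (\<tau> / (K * (\<rho> * L)))) 0)))
     \<le> K * \<rho> * L / \<tau> * exp (- (\<kappa> * (L * x\<^sup>2)))"
proof -
  define q where "q = max (ln (\<tau> / (K * (\<rho> * L)))) 0"
  have "exp (- (\<kappa> * \<eta> * q)) \<le> K * \<rho> * L / \<tau>"
  proof (cases "ln (\<tau> / (K * (\<rho> * L))) \<le> 0")
    case True
    then have "q = 0" by (simp add: q_def)
    moreover have "1 \<le> K * \<rho> * L / \<tau>" using True \<tau> K L \<rho> by (simp add: field_simps)
    ultimately show ?thesis by simp
  next
    case False
    then have q: "q = ln (\<tau> / (K * (\<rho> * L)))" "0 < q" by (auto simp: q_def)
    have "exp (- (\<kappa> * \<eta> * q)) \<le> exp (- q)" using \<kappa> q(2) by (simp add: mult_right_mono)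
    also have "\<dots> = K * \<rho> * L / \<tau>" using \<tau> K L \<rho> by (simp add: q(1) exp_minus mult.assoc)
    finally show ?thesis .
  qed
  then have "exp (- (\<kappa> * (L * x\<^sup>2))) * exp (- (\<kappa> * \<eta> * q)) \<le> exp (- (\<kappa> * (L * x\<^sup>2))) * (K * \<rho> * L / \<tau>)"
    by (intro mult_left_mono) auto
  then show ?thesis by (simp add: q_def algebra_simps flip: exp_add)
qed

lemma peeling_sum_le:
  fixes \<tau> K x \<eta> l z C :: real and J :: nat
  assumes \<tau>: "0 < \<tau>" and K: "0 < K" and x: "0 < x" and \<eta>: "0 < \<eta>" and l: "0 < l" and z: "1 < z"
    and C1: "z\<^sup>2 \<le> C * ((z\<^sup>2 - 1) / \<eta>)" and C2: "z\<^sup>2 \<le> C * (8 * z / (1 + z)\<^sup>2 - 1 / \<eta>)"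
  shows "(\<Sum>j<J. exp (- (8 * z / (1 + z)\<^sup>2 * (l * (z\<^sup>2) ^ j * x\<^sup>2
            + \<eta> * max (ln (\<tau> / (K * (z\<^sup>2 * (l * (z\<^sup>2) ^ j))))) 0))))
         \<le> C * (K / (\<tau> * x\<^sup>2)) * exp (- (x\<^sup>2 * l / \<eta>))"
proof -
  define \<kappa> where "\<kappa> = 8 * z / (1 + z)\<^sup>2"
  define w where "w j = l * (z\<^sup>2) ^ j * x\<^sup>2" for j
  define f where "f j = exp (- (w j / \<eta>))" for j
  have z2: "1 < z\<^sup>2" using z by (simp add: one_less_power)
  have "0 < C * ((z\<^sup>2 - 1) / \<eta>)" using C1 z2 by linarith
  then have C: "0 < C" using z2 \<eta> by (simp add: zero_less_mult_iff zero_less_divide_iff)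
  have "0 < C * (\<kappa> - 1 / \<eta>)" using C2 z2 by (simp add: \<kappa>_def)
  then have "1 \<le> \<kappa> * \<eta>" using C \<eta> by (simp add: zero_less_mult_iff field_simps)
  have "exp (- (\<kappa> * (l * (z\<^sup>2) ^ j * x\<^sup>2 + \<eta> * max (ln (\<tau> / (K * (z\<^sup>2 * (l * (z\<^sup>2) ^ j))))) 0)))
        \<le> K / (\<tau> * x\<^sup>2) * C * (f j - f (Suc j))" for j
  proof -
    have "exp (- (\<kappa> * (l * (z\<^sup>2) ^ j * x\<^sup>2 + \<eta> * max (ln (\<tau> / (K * (z\<^sup>2 * (l * (z\<^sup>2) ^ j))))) 0)))
       \<le> K * z\<^sup>2 * (l * (z\<^sup>2) ^ j) / \<tau> * exp (- (\<kappa> * (l * (z\<^sup>2) ^ j * x\<^sup>2)))"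
      using exp_neg_level_le[OF \<tau> K _ _ \<open>1 \<le> \<kappa> * \<eta>\<close>, of "l * (z\<^sup>2) ^ j" "z\<^sup>2" x] l z
      by (simp add: mult.assoc)
    also have "\<dots> = K / (\<tau> * x\<^sup>2) * (z\<^sup>2 * w j * exp (- \<kappa> * w j))"
      using x \<tau> by (simp add: w_def field_simps)
    also have "\<dots> \<le> K / (\<tau> * x\<^sup>2) * (C * (exp (- w j / \<eta>) - exp (- (z\<^sup>2) * w j / \<eta>)))"
      using mult_exp_le_exp_diff[OF z2 \<eta> _ C1, of "w j" \<kappa>] C2 \<tau> K x l
      by (intro mult_left_mono) (auto simp: \<kappa>_def w_def)
    also have "\<dots> = K / (\<tau> * x\<^sup>2) * C * (f j - f (Suc j))"
      by (simp add: f_def w_def algebra_simps)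
    finally show ?thesis .
  qed
  then have "(\<Sum>j<J. exp (- (\<kappa> * (l * (z\<^sup>2) ^ j * x\<^sup>2
            + \<eta> * max (ln (\<tau> / (K * (z\<^sup>2 * (l * (z\<^sup>2) ^ j))))) 0))))
        \<le> (\<Sum>j<J. K / (\<tau> * x\<^sup>2) * C * (f j - f (Suc j)))"
    by (intro sum_mono)
  also have "\<dots> = K / (\<tau> * x\<^sup>2) * C * (f 0 - f J)"
    by (simp only: sum_distrib_left[symmetric] sum_lessThan_telescope')
  also have "\<dots> \<le> K / (\<tau> * x\<^sup>2) * C * f 0"
    using \<tau> K x C by (intro mult_left_mono) (auto simp: f_def)
  also have "\<dots> = C * (K / (\<tau> * x\<^sup>2)) * exp (- (x\<^sup>2 * l / \<eta>))"
    by (simp add: f_def w_def mult_ac)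
  finally show ?thesis by (simp add: \<kappa>_def)
qed

lemma geometric_bucket_exists:
  fixes \<rho> l n :: real
  assumes "1 < \<rho>" "0 < l" "l \<le> n" "n < l * \<rho> ^ J"
  shows "\<exists>j<J. l * \<rho> ^ j \<le> n \<and> n < \<rho> * (l * \<rho> ^ j)"
  using assms(4)
proof (induction J)
  case 0
  then show ?case using assms by simp
next
  case (Suc J)
  show ?case
  proof (cases "n < l * \<rho> ^ J")
    case True
    then show ?thesis using Suc by (meson less_SucI)
  next
    case False
    then show ?thesis using Suc by (intro exI[of _ J]) (auto simp: mult_ac)
  qed
qed

section \<open>A maximal inequality by peeling\<close>

lemma (in prob_space) measure_exp_le_le:
  assumes "integrable M Z" "integral\<^sup>L M Z \<le> 1" "\<And>\<omega>. 0 \<le> Z \<omega>"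
  shows "measure M {\<omega>\<in>space M. exp c \<le> Z \<omega>} \<le> exp (- c)"
proof -
  have "measure M {\<omega>\<in>space M. exp c \<le> Z \<omega>} \<le> integral\<^sup>L M Z / exp c"
    using assms by (intro integral_Markov_inequality_measure[where A="space M"]) auto
  also have "\<dots> \<le> 1 / exp c" using assms(2) by (intro divide_right_mono) auto
  finally show ?thesis by (simp add: exp_minus inverse_eq_divide)
qed

lemma (in prob_space) peeling_deviation_bound:
  fixes n :: "'a \<Rightarrow> nat" and D :: "'a \<Rightarrow> real" and \<tau> K :: nat and \<eta> x l :: real
  assumes exp_mart: "\<And>\<theta>::real. integrable M (\<lambda>\<omega>. exp (\<theta> * D \<omega> - \<theta>\<^sup>2 * n \<omega> / 8))
                     \<and> (\<integral>\<omega>. exp (\<theta> * D \<omega> - \<theta>\<^sup>2 * n \<omega> / 8) \<partial>M) \<le> 1"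
    and E: "E \<subseteq> space M"
    and dev: "\<And>\<omega>. \<omega> \<in> E \<Longrightarrow> l \<le> n \<omega> \<and> n \<omega> \<le> \<tau> \<and> n \<omega> * (x + conf \<eta> \<tau> K (n \<omega>)) \<le> D \<omega>"
    and \<tau>: "0 < \<tau>" and K: "0 < K" and \<eta>: "1/2 < \<eta>" and x: "0 < x" and l: "0 < l"
  shows "measure M E \<le> (2 * \<eta>) powr (3/2) / ln (2 * \<eta>) * (K / (\<tau> * x\<^sup>2)) * exp (- (x\<^sup>2 * l / \<eta>))"
proof -
  define C where "C = (2 * \<eta>) powr (3/2) / ln (2 * \<eta>)"
  obtain z where z: "1 < z" and C1: "z\<^sup>2 \<le> C * ((z\<^sup>2 - 1) / \<eta>)"
    and C2: "z\<^sup>2 \<le> C * (8 * z / (1 + z)\<^sup>2 - 1 / \<eta>)"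
    using peeling_ratio_exists[OF \<eta>] unfolding C_def by blast
  have z2: "1 < z\<^sup>2" using z by (simp add: one_less_power)
  obtain J where "\<tau> / l < (z\<^sup>2) ^ J" using real_arch_pow[OF z2] by blast
  then have J: "\<tau> < l * (z\<^sup>2) ^ J" using l by (simp add: field_simps)
  define \<kappa> where "\<kappa> = 8 * z / (1 + z)\<^sup>2"
  define L where "L j = l * (z\<^sup>2) ^ j" for j
  define lev where "lev j = L j * x\<^sup>2 + \<eta> * max (ln (\<tau> / (K * (z\<^sup>2 * L j)))) 0" for j
  define \<theta> where "\<theta> j = 8 * sqrt (lev j) / (sqrt (L j) * (1 + z))" for j
  define Z where "Z j \<omega> = exp (\<theta> j * D \<omega> - (\<theta> j)\<^sup>2 * n \<omega> / 8)" for j \<omega>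
  define S where "S j = {\<omega>\<in>space M. exp (\<kappa> * lev j) \<le> Z j \<omega>}" for j
  have L: "0 < L j" for j using l z by (simp add: L_def)
  have Z: "integrable M (Z j)" "integral\<^sup>L M (Z j) \<le> 1" for j
    using exp_mart unfolding Z_def by auto
  have [measurable]: "Z j \<in> borel_measurable M" for j
    using Z(1) by (rule borel_measurable_integrable)
  have S_sets: "S j \<in> sets M" for j
    unfolding S_def by measurable
  have S_le: "measure M (S j) \<le> exp (- (\<kappa> * lev j))" for j
    unfolding S_def by (rule measure_exp_le_le[OF Z]) (simp add: Z_def)
  have "E \<subseteq> (\<Union>j<J. S j)"
  proof
    fix \<omega> assume "\<omega> \<in> E"
    note dev_\<omega> = dev[OF this]
    then have "n \<omega> < l * (z\<^sup>2) ^ J" using J by linarith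
    then obtain j where "j < J" "l * (z\<^sup>2) ^ j \<le> n \<omega>" "n \<omega> < z\<^sup>2 * (l * (z\<^sup>2) ^ j)"
      using geometric_bucket_exists[OF z2 l] dev_\<omega> by blast
    then have j: "j < J" "L j \<le> n \<omega>" "n \<omega> \<le> z\<^sup>2 * L j" by (simp_all add: L_def)
    have "sqrt (n \<omega>) * sqrt (lev j) \<le> D \<omega>"
      unfolding lev_def using dev_\<omega> \<tau> K L j \<eta> x by (intro sqrt_level_le_deviation) auto
    moreover have "0 \<le> lev j" using L[of j] \<eta> by (simp add: lev_def)
    ultimately have "\<kappa> * (sqrt (lev j))\<^sup>2 \<le> \<theta> j * D \<omega> - (\<theta> j)\<^sup>2 * n \<omega> / 8"
      unfolding \<kappa>_def \<theta>_def using L[of j] j z by (intro chernoff_exponent_on_bucket) auto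
    with \<open>0 \<le> lev j\<close> have "\<omega> \<in> S j" using \<open>\<omega> \<in> E\<close> E by (auto simp: S_def Z_def)
    then show "\<omega> \<in> (\<Union>j<J. S j)" using j by auto
  qed
  then have "measure M E \<le> measure M (\<Union>j<J. S j)"
    using S_sets by (intro finite_measure_mono) auto
  also have "\<dots> \<le> (\<Sum>j<J. measure M (S j))"
    using S_sets by (intro measure_UNION_le) auto
  also have "\<dots> \<le> (\<Sum>j<J. exp (- (\<kappa> * lev j)))"
    by (intro sum_mono S_le)
  also have "\<dots> \<le> C * (K / (\<tau> * x\<^sup>2)) * exp (- (x\<^sup>2 * l / \<eta>))"
    unfolding \<kappa>_def lev_def L_def using \<tau> K x \<eta> l z C1 C2 by (intro peeling_sum_le) auto
  finally show ?thesis by (simp add: C_def)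
qed

section \<open>Exponential supermartingales of nonanticipating policies\<close>

definition nonanticipating :: "nat \<Rightarrow> ((nat \<Rightarrow> nat \<Rightarrow> real) \<Rightarrow> nat \<Rightarrow> nat) \<Rightarrow> bool" where
  "nonanticipating K pol \<longleftrightarrow>
     (\<forall>Xr Xr' t. (\<forall>s\<in>{1..<t}. \<forall>j\<in>{1..K}. Xr s j = Xr' s j) \<longrightarrow> pol Xr t = pol Xr' t)"

lemma (in prob_space) integral_indep_update_le:
  fixes F G Z :: "'a \<Rightarrow> real"
  assumes indep: "indep_var borel F borel G"
    and Z: "integrable M Z" and F: "F \<in> borel_measurable M"
    and FZ: "\<And>\<omega>. \<omega> \<in> space M \<Longrightarrow> 0 \<le> F \<omega> \<and> F \<omega> \<le> Z \<omega>"
    and G: "integrable M G" "integral\<^sup>L M G \<le> 1"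
  shows "integrable M (\<lambda>\<omega>. Z \<omega> - F \<omega> + F \<omega> * G \<omega>)
    \<and> (\<integral>\<omega>. Z \<omega> - F \<omega> + F \<omega> * G \<omega> \<partial>M) \<le> integral\<^sup>L M Z"
proof
  have intF: "integrable M F"
    by (rule Bochner_Integration.integrable_bound[OF Z F]) (use FZ in \<open>fastforce intro!: AE_I2\<close>)
  have intFG: "integrable M (\<lambda>\<omega>. F \<omega> * G \<omega>)"
    by (rule indep_var_integrable[OF indep intF G(1)])
  show "integrable M (\<lambda>\<omega>. Z \<omega> - F \<omega> + F \<omega> * G \<omega>)"
    using Z intF intFG by auto
  have "integral\<^sup>L M F \<ge> 0"
    using FZ by (intro integral_nonneg_AE) auto
  then have "integral\<^sup>L M F * integral\<^sup>L M G \<le> integral\<^sup>L M F"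
    using G(2) by (simp add: mult_left_le)
  then show "(\<integral>\<omega>. Z \<omega> - F \<omega> + F \<omega> * G \<omega> \<partial>M) \<le> integral\<^sup>L M Z"
    using Z intF intFG by (simp add: indep_var_lebesgue_integral[OF indep intF G(1)])
qed

lemma (in prob_space) indep_var_past_present:
  fixes X :: "nat \<Rightarrow> nat \<Rightarrow> 'a \<Rightarrow> real"
  assumes meas: "\<forall>s\<in>{1..T}. \<forall>j\<in>{1..K}. X s j \<in> borel_measurable M"
    and indep: "indep_vars (\<lambda>_. borel) (\<lambda>(s, j). X s j) ({1..T} \<times> {1..K})"
    and u: "u \<in> {1..T}" and k: "k \<in> {1..K}"
    and F: "F \<in> borel_measurable (PiM ({1..<u} \<times> {1..K}) (\<lambda>_. borel))"
    and G: "G \<in> borel_measurable borel"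
  shows "indep_var borel (\<lambda>\<omega>. F (\<lambda>i\<in>{1..<u} \<times> {1..K}. X (fst i) (snd i) \<omega>))
                   borel (\<lambda>\<omega>. G (X u k \<omega>))"
proof -
  define A where "A = {1..<u} \<times> {1..K}"
  have AB: "A \<subseteq> {1..T} \<times> {1..K}" "{(u, k)} \<subseteq> {1..T} \<times> {1..K}" "A \<inter> {(u, k)} = {}"
    using u k by (auto simp: A_def)
  have "indep_var (PiM A (\<lambda>_. borel)) (\<lambda>\<omega>. \<lambda>i\<in>A. X (fst i) (snd i) \<omega>)
          (PiM {(u, k)} (\<lambda>_. borel)) (\<lambda>\<omega>. \<lambda>i\<in>{(u, k)}. X (fst i) (snd i) \<omega>)"
    using indep_var_restrict[OF indep AB(3) AB(1) AB(2)] by (simp add: case_prod_unfold)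
  moreover have "(\<lambda>v. G (v (u, k))) \<in> borel_measurable (PiM {(u, k)} (\<lambda>_. borel))"
    using G by measurable
  ultimately have "indep_var borel (F \<circ> (\<lambda>\<omega>. \<lambda>i\<in>A. X (fst i) (snd i) \<omega>))
      borel ((\<lambda>v. G (v (u, k))) \<circ> (\<lambda>\<omega>. \<lambda>i\<in>{(u, k)}. X (fst i) (snd i) \<omega>))"
    using F by (intro indep_var_compose) (auto simp: A_def)
  then show ?thesis by (simp add: comp_def A_def)
qed

lemma measurable_zero_extension:
  "(\<lambda>v s j. if (s, j) \<in> A then v (s, j) else (0::real))
     \<in> measurable (PiM A (\<lambda>_. borel)) (PiM UNIV (\<lambda>_. PiM UNIV (\<lambda>_. borel)))"
proof (intro measurable_PiM_single')
  fix s j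
  show "(\<lambda>v. if (s, j) \<in> A then v (s, j) else 0) \<in> borel_measurable (PiM A (\<lambda>_. borel))"
    by (cases "(s, j) \<in> A") auto
qed (auto simp: space_PiM)

lemma (in prob_space) subgaussian_exp_increment:
  fixes Y :: "'a \<Rightarrow> real"
  assumes "integrable M (\<lambda>\<omega>. exp (r * Y \<omega>))" "(\<integral>\<omega>. exp (r * Y \<omega>) \<partial>M) \<le> exp (r\<^sup>2 / 8)"
  shows "integrable M (\<lambda>\<omega>. exp (r * Y \<omega> - r\<^sup>2 / 8)) \<and> (\<integral>\<omega>. exp (r * Y \<omega> - r\<^sup>2 / 8) \<partial>M) \<le> 1"
proof -
  have eq: "(\<lambda>\<omega>. exp (r * Y \<omega> - r\<^sup>2 / 8)) = (\<lambda>\<omega>. exp (r * Y \<omega>) * exp (- (r\<^sup>2 / 8)))"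
    by (simp add: exp_add[symmetric])
  have "(\<integral>\<omega>. exp (r * Y \<omega>) \<partial>M) * exp (- (r\<^sup>2 / 8)) \<le> exp (r\<^sup>2 / 8) * exp (- (r\<^sup>2 / 8))"
    using assms(2) by (intro mult_right_mono) auto
  also have "\<dots> = 1" by (simp flip: exp_add)
  finally show ?thesis
    unfolding eq using assms(1) by simp
qed

(* Z (Suc u) differs from Z u only when arm k is played at time u; that event and Z u are a
   function F of the rewards before time u, hence independent of the reward X u k. *)
lemma (in prob_space) nonanticipating_exp_step:
  fixes X :: "nat \<Rightarrow> nat \<Rightarrow> 'a \<Rightarrow> real" and \<mu> :: "nat \<Rightarrow> nat \<Rightarrow> real"
    and pol :: "(nat \<Rightarrow> nat \<Rightarrow> real) \<Rightarrow> nat \<Rightarrow> nat" and W :: "nat set" and k :: nat and r :: real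
  defines "Z \<equiv> \<lambda>u \<omega>. exp (\<Sum>s\<in>{s\<in>W. s < u \<and> pol (\<lambda>s j. X s j \<omega>) s = k}. r * (X s k \<omega> - \<mu> s k) - r\<^sup>2 / 8)"
  assumes meas: "\<forall>s\<in>{1..T}. \<forall>j\<in>{1..K}. X s j \<in> borel_measurable M"
    and indep: "indep_vars (\<lambda>_. borel) (\<lambda>(s, j). X s j) ({1..T} \<times> {1..K})"
    and subg: "integrable M (\<lambda>\<omega>. exp (r * (X u k \<omega> - \<mu> u k)))"
      "(\<integral>\<omega>. exp (r * (X u k \<omega> - \<mu> u k)) \<partial>M) \<le> exp (r\<^sup>2 / 8)"
    and nonant: "nonanticipating K pol"
    and pol_meas: "\<And>t. (\<lambda>Xr. pol Xr t) \<in> measurable (PiM UNIV (\<lambda>_. PiM UNIV (\<lambda>_. borel))) (count_space UNIV)"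
    and k: "k \<in> {1..K}" and W: "W \<subseteq> {1..T}" and u: "u \<in> W" and Zu: "integrable M (Z u)"
  shows "integrable M (Z (Suc u)) \<and> integral\<^sup>L M (Z (Suc u)) \<le> integral\<^sup>L M (Z u)"
proof -
  have finW: "finite W" using W finite_subset by blast
  have uT: "u \<in> {1..T}" using u W by auto
  define A where "A = {1..<u} \<times> {1..K}"
  define past where "past \<omega> = (\<lambda>i\<in>A. X (fst i) (snd i) \<omega>)" for \<omega>
  define Y where "Y v = (\<lambda>s j. if (s, j) \<in> A then v (s, j) else 0)" for v :: "nat \<times> nat \<Rightarrow> real"
  define F where "F v = (if pol (Y v) u = k then 1 else 0) *
      exp (\<Sum>s\<in>{s\<in>W. s < u}. if pol (Y v) s = k then r * (Y v s k - \<mu> s k) - r\<^sup>2 / 8 else 0)" for v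
  have [measurable]: "(\<lambda>v. pol (Y v) t) \<in> measurable (PiM A (\<lambda>_. borel)) (count_space UNIV)" for t
    using measurable_zero_extension pol_meas unfolding Y_def by (rule measurable_compose)
  have [measurable]: "(\<lambda>v. Y v s j) \<in> borel_measurable (PiM A (\<lambda>_. borel))" for s j
    unfolding Y_def by (cases "(s, j) \<in> A") auto
  have F_meas: "F \<in> borel_measurable (PiM A (\<lambda>_. borel))"
    unfolding F_def by measurable
  have Y_past: "Y (past \<omega>) s j = X s j \<omega>" if "s \<in> {1..<u}" "j \<in> {1..K}" for s j \<omega>
    using that by (simp add: Y_def past_def A_def)
  have pol_past: "pol (Y (past \<omega>)) s = pol (\<lambda>s j. X s j \<omega>) s" if "s \<le> u" for s \<omega>
    using nonant that Y_past unfolding nonanticipating_def by auto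
  have F_past: "F (past \<omega>) = (if pol (\<lambda>s j. X s j \<omega>) u = k then 1 else 0) * Z u \<omega>" for \<omega>
  proof -
    have "Y (past \<omega>) s k = X s k \<omega>" if "s \<in> W" "s < u" for s
      using that W k by (intro Y_past) auto
    then show ?thesis
      using finW by (auto simp: F_def Z_def sum.inter_filter pol_past intro!: sum.cong)
  qed
  have Z_Suc: "Z (Suc u) \<omega> = Z u \<omega> - F (past \<omega>) + F (past \<omega>) * exp (r * (X u k \<omega> - \<mu> u k) - r\<^sup>2 / 8)"
    for \<omega>
  proof (cases "pol (\<lambda>s j. X s j \<omega>) u = k")
    case True
    then have "{s\<in>W. s < Suc u \<and> pol (\<lambda>s j. X s j \<omega>) s = k}
        = insert u {s\<in>W. s < u \<and> pol (\<lambda>s j. X s j \<omega>) s = k}"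
      using u by (auto simp: less_Suc_eq)
    then show ?thesis
      using finW True by (simp add: F_past Z_def exp_add[symmetric] add.commute)
  next
    case False
    then have "{s\<in>W. s < Suc u \<and> pol (\<lambda>s j. X s j \<omega>) s = k} = {s\<in>W. s < u \<and> pol (\<lambda>s j. X s j \<omega>) s = k}"
      by (auto simp: less_Suc_eq)
    then show ?thesis by (simp add: F_past False Z_def)
  qed
  have "indep_var borel (\<lambda>\<omega>. F (past \<omega>)) borel (\<lambda>\<omega>. exp (r * (X u k \<omega> - \<mu> u k) - r\<^sup>2 / 8))"
    unfolding past_def A_def using F_meas[unfolded A_def]
    by (intro indep_var_past_present[OF meas indep uT k]) auto
  moreover have "(\<lambda>\<omega>. F (past \<omega>)) \<in> borel_measurable M"
    using meas uT unfolding past_def A_def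
    by (intro measurable_compose[OF measurable_restrict F_meas[unfolded A_def]]) auto
  moreover have "0 \<le> F (past \<omega>) \<and> F (past \<omega>) \<le> Z u \<omega>" for \<omega>
    by (simp add: F_past Z_def)
  ultimately show ?thesis
    unfolding Z_Suc[abs_def] using subgaussian_exp_increment[OF subg] Zu
    by (intro integral_indep_update_le) auto
qed

lemma (in prob_space) nonanticipating_exp_supermartingale:
  fixes X :: "nat \<Rightarrow> nat \<Rightarrow> 'a \<Rightarrow> real" and \<mu> :: "nat \<Rightarrow> nat \<Rightarrow> real"
    and pol :: "(nat \<Rightarrow> nat \<Rightarrow> real) \<Rightarrow> nat \<Rightarrow> nat" and W :: "nat set" and k :: nat and r :: real
  defines "P \<equiv> \<lambda>\<omega>. {s\<in>W. pol (\<lambda>s j. X s j \<omega>) s = k}"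
  assumes meas: "\<forall>s\<in>{1..T}. \<forall>j\<in>{1..K}. X s j \<in> borel_measurable M"
    and indep: "indep_vars (\<lambda>_. borel) (\<lambda>(s, j). X s j) ({1..T} \<times> {1..K})"
    and subg: "\<forall>s\<in>{1..T}. integrable M (\<lambda>\<omega>. exp (r * (X s k \<omega> - \<mu> s k))) \<and>
                 (\<integral>\<omega>. exp (r * (X s k \<omega> - \<mu> s k)) \<partial>M) \<le> exp (r\<^sup>2 / 8)"
    and nonant: "nonanticipating K pol"
    and pol_meas: "\<And>t. (\<lambda>Xr. pol Xr t) \<in> measurable (PiM UNIV (\<lambda>_. PiM UNIV (\<lambda>_. borel))) (count_space UNIV)"
    and k: "k \<in> {1..K}" and W: "W \<subseteq> {1..T}"
  shows "integrable M (\<lambda>\<omega>. exp (r * (\<Sum>s\<in>P \<omega>. X s k \<omega> - \<mu> s k) - r\<^sup>2 * card (P \<omega>) / 8))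
    \<and> (\<integral>\<omega>. exp (r * (\<Sum>s\<in>P \<omega>. X s k \<omega> - \<mu> s k) - r\<^sup>2 * card (P \<omega>) / 8) \<partial>M) \<le> 1"
proof -
  define Z where "Z u \<omega> = exp (\<Sum>s\<in>{s\<in>W. s < u \<and> pol (\<lambda>s j. X s j \<omega>) s = k}.
                         r * (X s k \<omega> - \<mu> s k) - r\<^sup>2 / 8)" for u \<omega>
  have "integrable M (Z u) \<and> integral\<^sup>L M (Z u) \<le> 1" for u
  proof (induction u)
    case 0
    have "Z 0 = (\<lambda>\<omega>. 1)" by (simp add: Z_def fun_eq_iff)
    then show ?case by simp
  next
    case (Suc u)
    show ?case
    proof (cases "u \<in> W")
      case False
      then have "Z (Suc u) = Z u"
        unfolding Z_def by (intro ext arg_cong[where f=exp] sum.cong) (auto simp: less_Suc_eq)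
      then show ?thesis using Suc by simp
    next
      case True
      then have "integrable M (Z (Suc u)) \<and> integral\<^sup>L M (Z (Suc u)) \<le> integral\<^sup>L M (Z u)"
        using Suc subg W unfolding Z_def
        by (intro nonanticipating_exp_step[OF meas indep _ _ nonant pol_meas k W]) auto
      then show ?thesis using Suc by linarith
    qed
  qed
  moreover have "Z (Suc T) = (\<lambda>\<omega>. exp (r * (\<Sum>s\<in>P \<omega>. X s k \<omega> - \<mu> s k) - r\<^sup>2 * card (P \<omega>) / 8))"
  proof
    fix \<omega>
    have "{s\<in>W. s < Suc T \<and> pol (\<lambda>s j. X s j \<omega>) s = k} = P \<omega>"
      using W by (auto simp: P_def)
    then show "Z (Suc T) \<omega> = exp (r * (\<Sum>s\<in>P \<omega>. X s k \<omega> - \<mu> s k) - r\<^sup>2 * card (P \<omega>) / 8)"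
      by (simp add: Z_def sum_subtractf sum_distrib_left right_diff_distrib mult_ac)
  qed
  ultimately show ?thesis by metis
qed

section \<open>SW-MOSS\<close>

lemma swmoss_choice_cong:
  assumes "\<And>s j. s \<in> {1..<t} \<Longrightarrow> j \<in> {1..K} \<Longrightarrow> Xr s j = Xr' s j"
  shows "swmoss_choice K \<tau> \<eta> Xr \<phi> t = swmoss_choice K \<tau> \<eta> Xr' \<phi> t"
proof -
  have "emp_mean \<phi> Xr \<tau> j t = emp_mean \<phi> Xr' \<tau> j t" if "j \<in> {1..K}" for j
    unfolding emp_mean_def using assms that by (auto simp: window_def intro!: sum.cong arg_cong2[where f="(/)"])
  then have "(\<lambda>k. k \<in> {1..K} \<and> (\<forall>j\<in>{1..K}.
               emp_mean \<phi> Xr \<tau> j t + conf \<eta> \<tau> K (pulls \<phi> \<tau> j t)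
               \<le> emp_mean \<phi> Xr \<tau> k t + conf \<eta> \<tau> K (pulls \<phi> \<tau> k t)))
      = (\<lambda>k. k \<in> {1..K} \<and> (\<forall>j\<in>{1..K}.
               emp_mean \<phi> Xr' \<tau> j t + conf \<eta> \<tau> K (pulls \<phi> \<tau> j t)
               \<le> emp_mean \<phi> Xr' \<tau> k t + conf \<eta> \<tau> K (pulls \<phi> \<tau> k t)))"
    by (auto intro!: ext)
  then show ?thesis unfolding swmoss_choice_def by (simp only:)
qed

lemma swmoss_hist_cong:
  assumes "\<And>s j. s \<in> {1..<u} \<Longrightarrow> j \<in> {1..K} \<Longrightarrow> Xr s j = Xr' s j"
  shows "swmoss_hist K \<tau> \<eta> Xr u = swmoss_hist K \<tau> \<eta> Xr' u"
  using assms
proof (induction u)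
  case (Suc u)
  then have "swmoss_hist K \<tau> \<eta> Xr u = swmoss_hist K \<tau> \<eta> Xr' u" by auto
  moreover have "swmoss_choice K \<tau> \<eta> Xr \<phi> (Suc u) = swmoss_choice K \<tau> \<eta> Xr' \<phi> (Suc u)" for \<phi>
    using Suc.prems by (intro swmoss_choice_cong) auto
  ultimately show ?case by (simp add: Let_def)
qed simp

lemma nonanticipating_swmoss: "nonanticipating K (swmoss K T V \<eta>)"
  unfolding nonanticipating_def swmoss_def
proof (intro allI impI)
  fix Xr Xr' :: "nat \<Rightarrow> nat \<Rightarrow> real" and t
  assume "\<forall>s\<in>{1..<t}. \<forall>j\<in>{1..K}. Xr s j = Xr' s j"
  then have "swmoss_hist K (swmoss_tau K T V) \<eta> Xr t = swmoss_hist K (swmoss_tau K T V) \<eta> Xr' t"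
    by (intro swmoss_hist_cong) auto
  then show "swmoss_hist K (swmoss_tau K T V) \<eta> Xr t ! (t - 1) = swmoss_hist K (swmoss_tau K T V) \<eta> Xr' t ! (t - 1)"
    by simp
qed

lemma measurable_swmoss_hist:
  fixes Y :: "'b \<Rightarrow> nat \<Rightarrow> nat \<Rightarrow> real"
  assumes [measurable]: "\<And>s j. (\<lambda>v. Y v s j) \<in> borel_measurable N"
  shows "(\<lambda>v. swmoss_hist K \<tau> \<eta> (Y v) u) \<in> measurable N (count_space UNIV)"
proof (induction u)
  case (Suc u)
  have choice: "(\<lambda>v. swmoss_choice K \<tau> \<eta> (Y v) \<phi> t) \<in> measurable N (count_space UNIV)" for \<phi> t
    unfolding swmoss_choice_def emp_mean_def by measurable
  have "(\<lambda>v. (\<lambda>h. h @ [swmoss_choice K \<tau> \<eta> (Y v) (\<lambda>s. h ! (s - 1)) (Suc u)]) (swmoss_hist K \<tau> \<eta> (Y v) u))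
        \<in> measurable N (count_space UNIV)"
  proof (rule measurable_compose_countable[OF _ Suc])
    show "(\<lambda>v. h @ [swmoss_choice K \<tau> \<eta> (Y v) (\<lambda>s. h ! (s - 1)) (Suc u)]) \<in> measurable N (count_space UNIV)"
      for h :: "nat list"
      using choice by (rule measurable_compose) simp
  qed
  then show ?case by (simp add: Let_def)
qed simp

lemma measurable_swmoss:
  "(\<lambda>Xr. swmoss K T V \<eta> Xr t) \<in> measurable (PiM UNIV (\<lambda>_. PiM UNIV (\<lambda>_. borel))) (count_space UNIV)"
proof -
  have "(\<lambda>v. v s j) \<in> borel_measurable (PiM UNIV (\<lambda>_. PiM UNIV (\<lambda>_. borel :: real measure)))" for s j
  proof -
    have "(\<lambda>v. v s) \<in> measurable (PiM UNIV (\<lambda>_. PiM UNIV (\<lambda>_. borel :: real measure))) (PiM UNIV (\<lambda>_. borel))"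
      by (rule measurable_component_singleton) simp
    then show ?thesis by (rule measurable_compose) (rule measurable_component_singleton, simp)
  qed
  then show ?thesis
    unfolding swmoss_def by (intro measurable_compose[OF measurable_swmoss_hist[where Y="\<lambda>v. v"]]) auto
qed

lemma swmoss_tau_pos:
  assumes "0 < K" "0 < T" "0 < V"
  shows "0 < swmoss_tau K T V"
proof -
  have "0 < real K powr (1/3) * (real T / V) powr (2/3)" using assms by simp
  then show ?thesis unfolding swmoss_tau_def by linarith
qed

lemma pulls_le_tau: "pulls \<phi> \<tau> k t \<le> \<tau>"
proof -
  have "pulls \<phi> \<tau> k t \<le> card (window \<tau> t)" unfolding pulls_def
    by (intro card_mono) (auto simp: window_def)
  also have "\<dots> \<le> \<tau>" by (simp add: window_def)
  finally show ?thesis .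
qed

lemma emp_mean_diff_win_mean:
  "emp_mean \<phi> Xr \<tau> k t - win_mean \<phi> \<mu> \<tau> k t
     = (\<Sum>s\<in>{s\<in>window \<tau> t. \<phi> s = k}. Xr s k - \<mu> s k) / pulls \<phi> \<tau> k t"
  by (simp add: emp_mean_def win_mean_def sum_subtractf diff_divide_distrib)

lemma pulls_mul_le_neg_deviation:
  fixes c x :: real
  assumes "emp_mean \<phi> Xr \<tau> k t + c \<le> win_mean \<phi> \<mu> \<tau> k t - x" "0 < pulls \<phi> \<tau> k t"
  shows "pulls \<phi> \<tau> k t * (x + c) \<le> - (\<Sum>s\<in>{s\<in>window \<tau> t. \<phi> s = k}. Xr s k - \<mu> s k)"
proof -
  have "(\<Sum>s\<in>{s\<in>window \<tau> t. \<phi> s = k}. Xr s k - \<mu> s k) / pulls \<phi> \<tau> k t \<le> - (x + c)"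
    using assms(1) emp_mean_diff_win_mean[of \<phi> Xr \<tau> k t \<mu>] by linarith
  then have "(\<Sum>s\<in>{s\<in>window \<tau> t. \<phi> s = k}. Xr s k - \<mu> s k) \<le> - (x + c) * pulls \<phi> \<tau> k t"
    using assms(2) by (simp add: pos_divide_le_eq)
  then show ?thesis by (simp add: algebra_simps)
qed

lemma pulls_mul_le_deviation:
  fixes c x :: real
  assumes "win_mean \<phi> \<mu> \<tau> k t + x \<le> emp_mean \<phi> Xr \<tau> k t - c" "0 < pulls \<phi> \<tau> k t"
  shows "pulls \<phi> \<tau> k t * (x + c) \<le> (\<Sum>s\<in>{s\<in>window \<tau> t. \<phi> s = k}. Xr s k - \<mu> s k)"
  using assms emp_mean_diff_win_mean[of \<phi> Xr \<tau> k t \<mu>] by (simp add: le_divide_eq algebra_simps)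

theorem lemma3:
  fixes M :: "'a measure" and X :: "nat \<Rightarrow> nat \<Rightarrow> 'a \<Rightarrow> real" and \<mu> :: "nat \<Rightarrow> nat \<Rightarrow> real"
    and K T k t :: nat and V \<eta> a b x l :: real
  assumes "prob_space M"
    and meas: "\<forall>s\<in>{1..T}. \<forall>j\<in>{1..K}. X s j \<in> borel_measurable M"
    and indep: "prob_space.indep_vars M (\<lambda>_. borel) (\<lambda>(s, j). X s j) ({1..T} \<times> {1..K})"
    and int: "\<forall>s\<in>{1..T}. \<forall>j\<in>{1..K}. integrable M (X s j)"
    and mean: "\<forall>s\<in>{1..T}. \<forall>j\<in>{1..K}. (\<integral>\<omega>. X s j \<omega> \<partial>M) = \<mu> s j"
    and subg: "\<forall>s\<in>{1..T}. \<forall>j\<in>{1..K}. \<forall>r::real.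
                 integrable M (\<lambda>\<omega>. exp (r * (X s j \<omega> - \<mu> s j))) \<and>
                 (\<integral>\<omega>. exp (r * (X s j \<omega> - \<mu> s j)) \<partial>M) \<le> exp (r\<^sup>2 / 8)"
    and "b > 0"
    and range: "\<forall>s\<in>{1..T}. \<forall>j\<in>{1..K}. \<mu> s j \<in> {a..a + b}"
    and "V > 0"
    and "\<eta> > 1/2"
    and "k \<in> {1..K}" and "t \<in> {1..T}" and "x > 0" and "l \<ge> 1"
  shows "measure M {\<omega> \<in> space M.
            let Xr = (\<lambda>s j. X s j \<omega>); \<tau> = swmoss_tau K T V; \<phi> = swmoss K T V \<eta> Xr;
                n = pulls \<phi> \<tau> k t
            in emp_mean \<phi> Xr \<tau> k t + conf \<eta> \<tau> K n \<le> win_mean \<phi> \<mu> \<tau> k t - x \<and> real n \<ge> l}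
         \<le> (2 * \<eta>) powr (3/2) / ln (2 * \<eta>) * (real K / (real (swmoss_tau K T V) * x\<^sup>2))
             * exp (- (x\<^sup>2 * l / \<eta>))
       \<and> measure M {\<omega> \<in> space M.
            let Xr = (\<lambda>s j. X s j \<omega>); \<tau> = swmoss_tau K T V; \<phi> = swmoss K T V \<eta> Xr;
                n = pulls \<phi> \<tau> k t
            in emp_mean \<phi> Xr \<tau> k t - conf \<eta> \<tau> K n \<ge> win_mean \<phi> \<mu> \<tau> k t + x \<and> real n \<ge> l}
         \<le> (2 * \<eta>) powr (3/2) / ln (2 * \<eta>) * (real K / (real (swmoss_tau K T V) * x\<^sup>2))
             * exp (- (x\<^sup>2 * l / \<eta>))"
proof -
  interpret prob_space M by fact
  define \<tau> where "\<tau> = swmoss_tau K T V"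
  define P where "P \<omega> = {s\<in>window \<tau> t. swmoss K T V \<eta> (\<lambda>s j. X s j \<omega>) s = k}" for \<omega>
  define n where "n \<omega> = pulls (swmoss K T V \<eta> (\<lambda>s j. X s j \<omega>)) \<tau> k t" for \<omega>
  define D where "D \<omega> = (\<Sum>s\<in>P \<omega>. X s k \<omega> - \<mu> s k)" for \<omega>
  have \<tau>: "0 < \<tau>" unfolding \<tau>_def using assms by (intro swmoss_tau_pos) auto
  have "window \<tau> t \<subseteq> {1..T}" using \<open>t \<in> {1..T}\<close> by (auto simp: window_def)
  then have mart: "integrable M (\<lambda>\<omega>. exp (\<theta> * D \<omega> - \<theta>\<^sup>2 * n \<omega> / 8))
      \<and> (\<integral>\<omega>. exp (\<theta> * D \<omega> - \<theta>\<^sup>2 * n \<omega> / 8) \<partial>M) \<le> 1" for \<theta>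
    using nonanticipating_exp_supermartingale[OF meas indep _ nonanticipating_swmoss measurable_swmoss]
      subg \<open>k \<in> {1..K}\<close> unfolding D_def n_def P_def \<tau>_def pulls_def by auto
  have bound: "measure M E \<le> (2 * \<eta>) powr (3/2) / ln (2 * \<eta>) * (real K / (real \<tau> * x\<^sup>2)) * exp (- (x\<^sup>2 * l / \<eta>))"
    if "\<sigma>\<^sup>2 = 1" "E \<subseteq> space M" "\<And>\<omega>. \<omega> \<in> E \<Longrightarrow> l \<le> n \<omega> \<and> n \<omega> * (x + conf \<eta> \<tau> K (n \<omega>)) \<le> \<sigma> * D \<omega>"
    for \<sigma> E
  proof (rule peeling_deviation_bound[where D="\<lambda>\<omega>. \<sigma> * D \<omega>"])
    show "integrable M (\<lambda>\<omega>. exp (\<theta> * (\<sigma> * D \<omega>) - \<theta>\<^sup>2 * n \<omega> / 8))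
      \<and> (\<integral>\<omega>. exp (\<theta> * (\<sigma> * D \<omega>) - \<theta>\<^sup>2 * n \<omega> / 8) \<partial>M) \<le> 1" for \<theta>
      using mart[of "\<theta> * \<sigma>"] \<open>\<sigma>\<^sup>2 = 1\<close> by (simp add: power_mult_distrib mult.assoc)
  qed (use that \<tau> assms in \<open>auto simp: n_def pulls_le_tau\<close>)
  have "0 < n \<omega>" if "l \<le> n \<omega>" for \<omega> using that \<open>l \<ge> 1\<close> by simp
  then show ?thesis
    unfolding \<tau>_def[symmetric]
    by (intro conjI bound[of "-1"] bound[of 1])
      (auto simp: Let_def n_def D_def P_def \<tau>_def intro: pulls_mul_le_neg_deviation pulls_mul_le_deviation)
qed

end
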